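(* Let $F=\mathbb{F}_q$ be a finite field of characteristic not $2$, let $K=\mathbb{F}_{q^2}$ be its quadratic extension, $\sigma$ the non-trivial automorphism of $K/F$, and $d\in K$ with $K=F(d)$ and $d^2\in F$. Let $a\in K\setminus F$, $f(t)=t^2-a\in K[t;\sigma]$, $S_f=(K/F,\sigma,a)$ the nonassociative quaternion algebra, and $L_f=S_f\setminus\{0\}$ its multiplicative loop. (i) If $a\ne\lambda d$ for all $\lambda\in F^\times$, then $\mathrm{Aut}(L_f)$ contains a subgroup isomorphic to the cyclic group $\mathbb{Z}/(q+1)\mathbb{Z}$; all automorphisms in this subgroup are inner and extend to automorphisms of $S_f$. (ii) If $a=\lambda d$ for some $\lambda\in F^\times$, then $\mathrm{Aut}(L_f)$ contains a subgroup isomorphic to the dicyclic group of order $2q+2$, all of whose elements extend to automorphisms of $S_f$.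
   Context: $K[t;\sigma]$ is the twisted polynomial ring with $tb=\sigma(b)t$ for $b\in K$. $(K/F,\sigma,a)=K[t;\sigma]/K[t;\sigma](t^2-a)$ is the set of polynomials $x_0+x_1t$ ($x_i\in K$) with multiplication $g\circ h=gh\bmod_r(t^2-a)$, the remainder of right division by $t^2-a$; for $a\in K\setminus F$ it is a proper semifield, and $L_f$ is the loop of its nonzero elements. An inner automorphism of $L_f$ is a loop automorphism of the form $x\mapsto (c_lx)c$ with $c_l$ the left inverse of $c$. The dicyclic group of order $4l$ is $\langle x,y\mid x^{2l}=1,\ y^2=x^l,\ y^{-1}xy=x^{-1}\rangle$. *)

theory Defs
  imports "HOL-Algebra.Elementary_Groups"
begin

(* Elements x0 + x1 t of S_f = (K/F, sigma, a) are represented as pairs (x0, x1) in K x K. *)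

(* Multiplication g o h = g h mod_r (t^2 - a) in K[t;sigma], written out:
   (x0 + x1 t)(y0 + y1 t) = x0 y0 + x1 sigma(y1) t^2 + (x0 y1 + x1 sigma(y0)) t,
   and t^2 = 1 (t^2 - a) + a, so the right remainder replaces t^2 by a. *)
definition nq_mult :: "('k::field \<Rightarrow> 'k) \<Rightarrow> 'k \<Rightarrow> 'k \<times> 'k \<Rightarrow> 'k \<times> 'k \<Rightarrow> 'k \<times> 'k" where
  "nq_mult \<sigma> a x y =
     (fst x * fst y + snd x * \<sigma> (snd y) * a, fst x * snd y + snd x * \<sigma> (fst y))"

definition loop_carrier :: "('k::field \<times> 'k) set" where
  "loop_carrier = UNIV - {(0, 0)}"

definition loop_aut :: "('k::field \<Rightarrow> 'k) \<Rightarrow> 'k \<Rightarrow> ('k \<times> 'k \<Rightarrow> 'k \<times> 'k) \<Rightarrow> bool" where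
  "loop_aut \<sigma> a \<phi> \<longleftrightarrow>
     bij_betw \<phi> loop_carrier loop_carrier \<and> \<phi> \<in> extensional loop_carrier \<and>
     (\<forall>x\<in>loop_carrier. \<forall>y\<in>loop_carrier. \<phi> (nq_mult \<sigma> a x y) = nq_mult \<sigma> a (\<phi> x) (\<phi> y))"

definition AutL :: "('k::field \<Rightarrow> 'k) \<Rightarrow> 'k \<Rightarrow> ('k \<times> 'k \<Rightarrow> 'k \<times> 'k) monoid" where
  "AutL \<sigma> a = \<lparr> carrier = {\<phi>. loop_aut \<sigma> a \<phi>},
                 mult = (\<lambda>\<phi> \<psi>. restrict (\<phi> \<circ> \<psi>) loop_carrier),
                 one = restrict id loop_carrier \<rparr>"

definition inner_aut :: "('k::field \<Rightarrow> 'k) \<Rightarrow> 'k \<Rightarrow> ('k \<times> 'k \<Rightarrow> 'k \<times> 'k) \<Rightarrow> bool" where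
  "inner_aut \<sigma> a \<phi> \<longleftrightarrow> loop_aut \<sigma> a \<phi> \<and>
     (\<exists>c\<in>loop_carrier. \<exists>cl\<in>loop_carrier. nq_mult \<sigma> a cl c = (1, 0) \<and>
        (\<forall>x\<in>loop_carrier. \<phi> x = nq_mult \<sigma> a (nq_mult \<sigma> a cl x) c))"

(* F-algebra automorphisms of S_f, F = fixed field of sigma *)
definition alg_aut :: "('k::field \<Rightarrow> 'k) \<Rightarrow> 'k \<Rightarrow> ('k \<times> 'k \<Rightarrow> 'k \<times> 'k) \<Rightarrow> bool" where
  "alg_aut \<sigma> a \<Phi> \<longleftrightarrow> bij \<Phi> \<and>
     (\<forall>x y. \<Phi> (fst x + fst y, snd x + snd y) = (fst (\<Phi> x) + fst (\<Phi> y), snd (\<Phi> x) + snd (\<Phi> y))) \<and>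
     (\<forall>l x. \<sigma> l = l \<longrightarrow> \<Phi> (l * fst x, l * snd x) = (l * fst (\<Phi> x), l * snd (\<Phi> x))) \<and>
     (\<forall>x y. \<Phi> (nq_mult \<sigma> a x y) = nq_mult \<sigma> a (\<Phi> x) (\<Phi> y))"

definition extends_to_alg_aut :: "('k::field \<Rightarrow> 'k) \<Rightarrow> 'k \<Rightarrow> ('k \<times> 'k \<Rightarrow> 'k \<times> 'k) \<Rightarrow> bool" where
  "extends_to_alg_aut \<sigma> a \<phi> \<longleftrightarrow> (\<exists>\<Phi>. alg_aut \<sigma> a \<Phi> \<and> (\<forall>x\<in>loop_carrier. \<Phi> x = \<phi> x))"

(* Dicyclic group of order 4l, concrete model: (k, e) stands for x^k y^e,
   k in {0..<2l}; relations x^(2l)=1, y^2 = x^l, y^-1 x y = x^-1. *)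
definition dicyclic_group :: "nat \<Rightarrow> (int \<times> bool) monoid" where
  "dicyclic_group l = \<lparr> carrier = {0..<2 * int l} \<times> UNIV,
     mult = (\<lambda>(a, e) (b, f).
        if \<not> e then ((a + b) mod (2 * int l), f)
        else if \<not> f then ((a - b) mod (2 * int l), True)
        else ((a - b + int l) mod (2 * int l), False)),
     one = (0, False) \<rparr>"

end

(*
  The norm-one group U = {u. u \<sigma>(u) = 1} of K is cyclic of order q + 1: by Hilbert 90 it is
  the image of the cyclic group K^* under c \<mapsto> \<sigma>(c)/c, whose kernel is F^*.  For u in U the
  map x0 + x1 t \<mapsto> x0 + x1 u t is an algebra automorphism of S_f, namely the inner automorphism
  induced by c when u = \<sigma>(c)/c; these maps form the cyclic subgroup.  If a = \<lambda>d then
  \<sigma>(a) = -a, and since the norm K^* \<rightarrow> F^* is onto there is m with m \<sigma>(m) = -1; then the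
  semilinear maps x0 + x1 t \<mapsto> \<sigma>(x0) + \<sigma>(x1) m u t are automorphisms too.  With a generator h
  of U we have h^((q+1)/2) = -1, and composing these maps yields the dicyclic relations.
*)

theory Submission
  imports Defs "HOL-Algebra.Multiplicative_Group" "HOL-Algebra.Algebraic_Closure_Type"
begin

section \<open>Cyclic groups of field elements\<close>

lemma finite_field_generator:
  "\<exists>g::'k::{field,finite}. g \<noteq> 0 \<and> (\<forall>x. x \<noteq> 0 \<longrightarrow> (\<exists>i. x = g ^ i))"
proof -
  let ?R = "ring_of_type_algebra :: 'k ring"
  interpret R: Ring.field ?R by (rule field_from_type_algebra)
  have pow: "x [^]\<^bsub>?R\<^esub> (i::nat) = x ^ i" for x :: 'k and i
    by (induct i) (simp_all add: ring_of_type_algebra_def mult.commute)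
  obtain g where g: "g \<in> carrier (mult_of ?R)"
    and gen: "carrier (mult_of ?R) = {g [^]\<^bsub>?R\<^esub> i | i::nat. i \<in> UNIV}"
    using R.finite_field_mult_group_has_gen by (auto simp: ring_of_type_algebra_def nat_pow_mult_of)
  have "x \<noteq> 0 \<Longrightarrow> \<exists>i. x = g ^ i" for x
    using gen pow by (auto simp: ring_of_type_algebra_def)
  moreover have "g \<noteq> 0" using g by (simp add: ring_of_type_algebra_def)
  ultimately show ?thesis by blast
qed

lemma bij_betw_restrict: "bij_betw f A B \<Longrightarrow> bij_betw (restrict f A) A B"
  using bij_betw_cong[of A "restrict f A" f B] by simp

lemma card_eq_card_fibre_mult_card_image:
  assumes "finite A" and "\<And>y. y \<in> f ` A \<Longrightarrow> card {x\<in>A. f x = y} = k"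
  shows "card A = k * card (f ` A)"
proof -
  have "card A = card (\<Union>y\<in>f ` A. {x\<in>A. f x = y})"
    by (rule arg_cong[where f = card]) auto
  also have "\<dots> = (\<Sum>y\<in>f ` A. card {x\<in>A. f x = y})"
    by (rule card_UN_disjoint) (use assms(1) in auto)
  also have "\<dots> = k * card (f ` A)" using assms(2) by simp
  finally show ?thesis .
qed

lemma card_nonzero_eq_card_kernel_mult_card_image:
  fixes f :: "'k::{field,finite} \<Rightarrow> 'k"
  assumes mult: "\<And>x y. f (x * y) = f x * f y" and nonzero: "\<And>x. x \<noteq> 0 \<Longrightarrow> f x \<noteq> 0"
  shows "card (- {0::'k}) = card {x. x \<noteq> 0 \<and> f x = 1} * card (f ` (- {0}))"
proof (rule card_eq_card_fibre_mult_card_image)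
  fix y assume "y \<in> f ` (- {0})"
  then obtain e where e: "e \<noteq> 0" "y = f e" by auto
  have "{x \<in> - {0}. f x = y} = (\<lambda>u. u * e) ` {x. x \<noteq> 0 \<and> f x = 1}"
  proof (intro equalityI subsetI)
    fix x assume x: "x \<in> {x \<in> - {0}. f x = y}"
    have "f (x / e) * f e = f x" using mult[of "x / e" e] e by simp
    then have "f (x / e) = 1" using x e nonzero[of e] by auto
    moreover have "x = x / e * e" "x / e \<noteq> 0" using x e by auto
    ultimately show "x \<in> (\<lambda>u. u * e) ` {x. x \<noteq> 0 \<and> f x = 1}" by blast
  qed (use e mult in auto)
  moreover have "inj_on (\<lambda>u. u * e) {x. x \<noteq> 0 \<and> f x = 1}" using e by (auto simp: inj_on_def)
  ultimately show "card {x \<in> - {0}. f x = y} = card {x. x \<noteq> 0 \<and> f x = 1}"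
    by (simp add: card_image)
qed simp

lemma power_mod_eq_if_power_eq_1:
  fixes h :: "'a::monoid_mult"
  assumes "h ^ n = 1" shows "h ^ (i mod n) = h ^ i"
proof -
  have "h ^ i = h ^ (n * (i div n) + i mod n)" by simp
  also have "\<dots> = (h ^ n) ^ (i div n) * h ^ (i mod n)" by (simp only: power_add power_mult)
  finally show ?thesis using assms by simp
qed

lemma nat_square_minus_one: "(q::nat) * q - 1 = (q - 1) * (q + 1)"
  by (cases q) (simp_all add: algebra_simps)

locale field_element_of_order =
  fixes h :: "'k::field" and n :: nat
  assumes nonzero: "h \<noteq> 0"
    and card_powers: "card (range (\<lambda>i::nat. h ^ i)) = n"
    and order_pos: "n > 0"
begin

lemma power_neq_1: assumes "0 < k" "k < n" shows "h ^ k \<noteq> 1"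
proof
  assume hk: "h ^ k = 1"
  have "range (\<lambda>i::nat. h ^ i) \<subseteq> (\<lambda>i. h ^ i) ` {..<k}"
  proof
    fix y assume "y \<in> range (\<lambda>i::nat. h ^ i)"
    then obtain i where "y = h ^ (i mod k)"
      using power_mod_eq_if_power_eq_1[OF hk] by auto
    moreover have "i mod k < k" using assms(1) by simp
    ultimately show "y \<in> (\<lambda>i. h ^ i) ` {..<k}" by blast
  qed
  then have "card (range (\<lambda>i::nat. h ^ i)) \<le> card ((\<lambda>i. h ^ i) ` {..<k})"
    by (rule card_mono[rotated]) simp
  also have "\<dots> \<le> card {..<k}" by (rule card_image_le) simp
  finally show False using card_powers assms(2) by simp
qed

lemma power_order_eq_1: "h ^ n = 1"
proof -
  have "\<not> inj_on (\<lambda>i. h ^ i) {..n}"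
  proof
    assume "inj_on (\<lambda>i. h ^ i) {..n}"
    then have "card ((\<lambda>i. h ^ i) ` {..n}) = n + 1" by (simp add: card_image)
    moreover have "finite (range (\<lambda>i::nat. h ^ i))"
      using card_powers order_pos card_gt_0_iff by blast
    then have "card ((\<lambda>i. h ^ i) ` {..n}) \<le> n"
      using card_mono[of "range (\<lambda>i::nat. h ^ i)" "(\<lambda>i. h ^ i) ` {..n}"] card_powers by auto
    ultimately show False by simp
  qed
  then obtain i j where ij: "i < j" "j \<le> n" "h ^ i = h ^ j"
    unfolding inj_on_def by (metis atMost_iff linorder_neqE_nat)
  have "h ^ j = h ^ i * h ^ (j - i)"
    using ij by (metis le_add_diff_inverse less_imp_le power_add)
  then have hji: "h ^ (j - i) = 1" using ij(3) nonzero by simp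
  then have "j - i = n" using ij power_neq_1[of "j - i"] by fastforce
  with hji show ?thesis by simp
qed

lemma order_dvd_if_power_eq_1: "h ^ k = 1 \<Longrightarrow> n dvd k"
  using power_mod_eq_if_power_eq_1[OF power_order_eq_1, of k] power_neq_1[of "k mod n"] order_pos
  by (auto simp: dvd_eq_mod_eq_0)

lemma power_int_mod_order: "h powi (i mod int n) = h powi i"
proof -
  have "h powi i = (h powi int n) powi (i div int n) * h powi (i mod int n)"
    by (metis div_mult_mod_eq nonzero power_int_add power_int_mult mult.commute)
  then show ?thesis by (simp add: power_order_eq_1)
qed

lemma power_int_inj:
  assumes "i \<in> {0..<int n}" "j \<in> {0..<int n}" "h powi i = h powi j"
  shows "i = j"
proof -
  have False if "u \<in> {0..<int n}" "v \<in> {0..<int n}" "u < v" "h powi u = h powi v" for u v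
  proof -
    have "h powi v = h powi u * h powi (v - u)" using nonzero by (simp flip: power_int_add)
    then have "h powi (v - u) = 1" using that(4) nonzero by simp
    then have "h ^ nat (v - u) = 1" using that(3) by (simp add: power_int_def)
    moreover have "0 < nat (v - u)" "nat (v - u) < n" using that by auto
    ultimately show False using power_neq_1 by blast
  qed
  then show ?thesis using assms by (metis linorder_neqE_linordered_idom)
qed

lemma minus_one_power_half_order:
  assumes "-1 \<in> range (\<lambda>i::nat. h ^ i)" and "(-1::'k) \<noteq> 1"
  obtains l where "n = 2 * l" and "h ^ l = -1"
proof -
  obtain j where j: "h ^ j = -1" using assms(1) by auto
  define l where "l = j mod n"
  have hl: "h ^ l = -1" using j power_mod_eq_if_power_eq_1[OF power_order_eq_1] by (simp add: l_def)
  have "l \<noteq> 0" using hl assms(2) by (metis power_0)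
  have "n dvd 2 * l"
    by (rule order_dvd_if_power_eq_1) (simp add: hl power_mult mult.commute[of 2])
  then obtain k where k: "2 * l = n * k" by (rule dvdE)
  have "l < n" using order_pos by (simp add: l_def)
  then have "n * k < n * 2" using k by linarith
  then have "k < 2" by (rule mult_less_cancel1[THEN iffD1, THEN conjunct2])
  moreover have "k \<noteq> 0"
  proof
    assume "k = 0"
    with k have "2 * l = 0" by simp
    with \<open>l \<noteq> 0\<close> show False by simp
  qed
  ultimately have "k = 1" by linarith
  then have "n = 2 * l" using k by simp
  with hl show ?thesis using that by blast
qed

end

lemma inj_hom_image_subgroup_iso:
  assumes G: "monoid G"
    and hom: "\<psi> \<in> hom D G" and inj: "inj_on \<psi> (carrier D)"
    and closed: "\<And>x y. x \<in> carrier D \<Longrightarrow> y \<in> carrier D \<Longrightarrow> x \<otimes>\<^bsub>D\<^esub> y \<in> carrier D"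
    and one: "\<one>\<^bsub>D\<^esub> \<in> carrier D" "\<psi> \<one>\<^bsub>D\<^esub> = \<one>\<^bsub>G\<^esub>"
    and inverse: "\<And>x. x \<in> carrier D \<Longrightarrow> \<exists>y\<in>carrier D. x \<otimes>\<^bsub>D\<^esub> y = \<one>\<^bsub>D\<^esub> \<and> y \<otimes>\<^bsub>D\<^esub> x = \<one>\<^bsub>D\<^esub>"
  shows "subgroup (\<psi> ` carrier D) G" and "G\<lparr>carrier := \<psi> ` carrier D\<rparr> \<cong> D"
proof -
  have into: "\<psi> x \<in> carrier G" and mult: "\<psi> (x \<otimes>\<^bsub>D\<^esub> y) = \<psi> x \<otimes>\<^bsub>G\<^esub> \<psi> y"
    if "x \<in> carrier D" "y \<in> carrier D" for x y
    using hom that by (auto simp: hom_def)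
  show "subgroup (\<psi> ` carrier D) G"
  proof (rule subgroup.intro)
    show "\<psi> ` carrier D \<subseteq> carrier G" using into by blast
    show "x \<otimes>\<^bsub>G\<^esub> y \<in> \<psi> ` carrier D" if "x \<in> \<psi> ` carrier D" "y \<in> \<psi> ` carrier D" for x y
      using that closed by (auto simp flip: mult)
    show "\<one>\<^bsub>G\<^esub> \<in> \<psi> ` carrier D" using one by (metis imageI)
    show "inv\<^bsub>G\<^esub> x \<in> \<psi> ` carrier D" if x: "x \<in> \<psi> ` carrier D" for x
    proof -
      obtain u where u: "u \<in> carrier D" "x = \<psi> u" using x by blast
      obtain v where v: "v \<in> carrier D" "u \<otimes>\<^bsub>D\<^esub> v = \<one>\<^bsub>D\<^esub>" "v \<otimes>\<^bsub>D\<^esub> u = \<one>\<^bsub>D\<^esub>"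
        using inverse[OF u(1)] by blast
      have "\<psi> v = inv\<^bsub>G\<^esub> (\<psi> u)"
        by (rule monoid.inv_unique'[OF G into[OF u(1) u(1)] into[OF v(1) v(1)]])
           (simp_all add: mult[symmetric] u(1) v one)
      then show ?thesis using u v by (metis imageI)
    qed
  qed
  have "bij_betw \<psi> (carrier D) (\<psi> ` carrier D)" using inj by (simp add: bij_betw_imageI)
  then have "inv_into (carrier D) \<psi> \<in> iso (G\<lparr>carrier := \<psi> ` carrier D\<rparr>) D"
    using inj closed mult
    by (auto simp: iso_def hom_def bij_betw_inv_into inv_into_into intro!: inv_into_f_eq)
  then show "G\<lparr>carrier := \<psi> ` carrier D\<rparr> \<cong> D" by (rule is_isoI)
qed

lemma carrier_dicyclic_group: "carrier (dicyclic_group l) = {0..<2 * int l} \<times> UNIV"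
  by (simp add: dicyclic_group_def)

lemma one_dicyclic_group: "\<one>\<^bsub>dicyclic_group l\<^esub> = (0, False)"
  by (simp add: dicyclic_group_def)

lemma mult_dicyclic_group:
  "(i, e) \<otimes>\<^bsub>dicyclic_group l\<^esub> (j, f) =
     (if \<not> e then ((i + j) mod (2 * int l), f)
      else if \<not> f then ((i - j) mod (2 * int l), True)
      else ((i - j + int l) mod (2 * int l), False))"
  by (simp add: dicyclic_group_def)

lemma dicyclic_group_mult_closed:
  "0 < l \<Longrightarrow> x \<otimes>\<^bsub>dicyclic_group l\<^esub> y \<in> carrier (dicyclic_group l)"
  by (cases x; cases y) (simp add: mult_dicyclic_group carrier_dicyclic_group)

lemma dicyclic_group_inverse:
  assumes "0 < l"
  shows "\<exists>y\<in>carrier (dicyclic_group l).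
           x \<otimes>\<^bsub>dicyclic_group l\<^esub> y = \<one>\<^bsub>dicyclic_group l\<^esub> \<and>
           y \<otimes>\<^bsub>dicyclic_group l\<^esub> x = \<one>\<^bsub>dicyclic_group l\<^esub>"
proof -
  obtain i e where x: "x = (i, e)" by (cases x)
  let ?N = "2 * int l"
  show ?thesis
  proof (cases e)
    case False
    have "(i + (- i) mod ?N) mod ?N = 0" "((- i) mod ?N + i) mod ?N = 0"
      by (simp_all add: mod_add_right_eq mod_add_left_eq)
    then show ?thesis using False x assms
      by (intro bexI[of _ "((- i) mod ?N, False)"])
         (simp_all add: mult_dicyclic_group one_dicyclic_group carrier_dicyclic_group)
  next
    case True
    have "i - (i + int l) mod ?N + int l = ?N * ((i + int l) div ?N)"
      by (simp add: minus_mod_eq_mult_div[symmetric])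
    then have "(i - (i + int l) mod ?N + int l) mod ?N = 0" by simp
    moreover have "((i + int l) mod ?N - i + int l) mod ?N = ((i + int l) - i + int l) mod ?N"
      by (metis mod_add_left_eq mod_diff_left_eq)
    then have "((i + int l) mod ?N - i + int l) mod ?N = 0" by simp
    ultimately show ?thesis using True x assms
      by (intro bexI[of _ "((i + int l) mod ?N, True)"])
         (simp_all add: mult_dicyclic_group one_dicyclic_group carrier_dicyclic_group)
  qed
qed

section \<open>The quadratic extension K/F\<close>

locale quadratic_ext =
  fixes \<sigma> :: "'k::{field,finite} \<Rightarrow> 'k" and d :: 'k
  assumes sigma_add: "\<And>x y. \<sigma> (x + y) = \<sigma> x + \<sigma> y"
    and sigma_mult: "\<And>x y. \<sigma> (x * y) = \<sigma> x * \<sigma> y"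
    and sigma_inv: "\<And>x. \<sigma> (\<sigma> x) = x"
    and two_neq_zero: "(2::'k) \<noteq> 0"
    and d_gen: "\<sigma> d \<noteq> d"
    and d_sq: "\<sigma> (d ^ 2) = d ^ 2"
begin

definition fixed_field :: "'k set" where
  "fixed_field = {x. \<sigma> x = x}"

definition field_norm :: "'k \<Rightarrow> 'k" where
  "field_norm c = c * \<sigma> c"

definition sigma_quot :: "'k \<Rightarrow> 'k" where
  "sigma_quot c = \<sigma> c / c"

lemma sigma_0 [simp]: "\<sigma> 0 = 0"
  using sigma_add[of 0 0] by (metis add.right_neutral add_left_cancel)

lemma sigma_eq_0_iff [simp]: "\<sigma> x = 0 \<longleftrightarrow> x = 0"
  by (metis sigma_0 sigma_inv)

lemma sigma_1 [simp]: "\<sigma> 1 = 1"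
proof -
  have "\<sigma> 1 * \<sigma> 1 = \<sigma> 1" using sigma_mult[of 1 1] by simp
  then show ?thesis by (metis mult_cancel_left2 sigma_eq_0_iff one_neq_zero)
qed

lemma sigma_minus [simp]: "\<sigma> (- x) = - \<sigma> x"
proof -
  have "\<sigma> x + \<sigma> (- x) = 0" using sigma_add[of x "- x"] by simp
  then show ?thesis by (metis add.inverse_unique)
qed

lemma sigma_diff [simp]: "\<sigma> (x - y) = \<sigma> x - \<sigma> y"
  using sigma_add[of x "- y"] by simp

lemma sigma_inverse [simp]: "\<sigma> (inverse x) = inverse (\<sigma> x)"
proof (cases "x = 0")
  case False
  then have "\<sigma> x * \<sigma> (inverse x) = 1" by (simp flip: sigma_mult)
  then show ?thesis by (metis inverse_unique)
qed simp

lemma sigma_divide [simp]: "\<sigma> (x / y) = \<sigma> x / \<sigma> y"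
  by (simp add: divide_inverse sigma_mult)

lemma sigma_power [simp]: "\<sigma> (x ^ n) = \<sigma> x ^ n"
  by (induct n) (simp_all add: sigma_mult)

lemma sigma_power_int [simp]: "\<sigma> (x powi i) = \<sigma> x powi i"
  by (simp add: power_int_def)

lemma sigma_2 [simp]: "\<sigma> 2 = 2"
proof -
  have "\<sigma> (1 + 1) = 1 + 1" by (simp only: sigma_add sigma_1)
  then show ?thesis by simp
qed

lemma sigma_d: "\<sigma> d = - d"
proof -
  have "(\<sigma> d - d) * (\<sigma> d + d) = 0"
    using d_sq by (simp add: power2_eq_square sigma_mult algebra_simps)
  then show ?thesis using d_gen by (simp add: eq_neg_iff_add_eq_0)
qed

lemma d_nonzero: "d \<noteq> 0"
  using d_gen by auto

lemma card_UNIV_eq_square: "card (UNIV :: 'k set) = card fixed_field * card fixed_field"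
proof -
  let ?f = "\<lambda>(x, y). x + y * d"
  have "bij_betw ?f (fixed_field \<times> fixed_field) UNIV"
  proof (rule bij_betwI')
    fix p p' assume "p \<in> fixed_field \<times> fixed_field" "p' \<in> fixed_field \<times> fixed_field"
    then obtain x y x' y' where p: "p = (x, y)" "p' = (x', y')"
      and fixed: "\<sigma> x = x" "\<sigma> y = y" "\<sigma> x' = x'" "\<sigma> y' = y'"
      by (auto simp: fixed_field_def)
    show "(?f p = ?f p') = (p = p')"
    proof
      assume "?f p = ?f p'"
      then have e1: "x + y * d = x' + y' * d" by (simp add: p)
      then have "\<sigma> (x + y * d) = \<sigma> (x' + y' * d)" by simp
      then have e2: "x - y * d = x' - y' * d" unfolding sigma_add sigma_mult sigma_d fixed by simp
      have "(x + y * d) - (x - y * d) = (x' + y' * d) - (x' - y' * d)" by (simp only: e1 e2)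
      then have "2 * (y * d) = 2 * (y' * d)" by (simp add: algebra_simps)
      then have "y = y'" using two_neq_zero d_nonzero by simp
      with e1 show "p = p'" by (simp add: p)
    qed simp
  next
    fix z :: 'k
    let ?x = "(z + \<sigma> z) / 2" and ?y = "(z - \<sigma> z) / (2 * d)"
    have "\<sigma> ?x = ?x" by (simp add: sigma_add sigma_inv add.commute)
    moreover have "\<sigma> ?y = ?y"
    proof -
      have "\<sigma> ?y = (\<sigma> z - z) / (2 * - d)" by (simp add: sigma_mult sigma_inv sigma_d)
      also have "\<dots> = ?y"
        by (simp only: mult_minus_right divide_minus_right minus_divide_left minus_diff_eq)
      finally show ?thesis .
    qed
    moreover have "z = ?x + ?y * d" using d_nonzero two_neq_zero
      by (simp add: add_divide_distrib[symmetric] diff_divide_distrib[symmetric])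
    ultimately have "(?x, ?y) \<in> fixed_field \<times> fixed_field" "z = ?f (?x, ?y)"
      by (simp_all only: fixed_field_def mem_Times_iff mem_Collect_eq fst_conv snd_conv case_prod_conv)
    then show "\<exists>p\<in>fixed_field \<times> fixed_field. z = ?f p" by blast
  qed simp
  then have "card (fixed_field \<times> fixed_field) = card (UNIV :: 'k set)" by (rule bij_betw_same_card)
  then show ?thesis by (simp add: card_cartesian_product)
qed

lemma two_le_card_fixed_field: "2 \<le> card fixed_field"
proof -
  have "{0, 1} \<subseteq> fixed_field" by (simp add: fixed_field_def)
  then have "card {0::'k, 1} \<le> card fixed_field" by (rule card_mono[OF finite])
  then show ?thesis by simp
qed

lemma card_nonzero: "card (- {0::'k}) = card fixed_field * card fixed_field - 1"
  using card_UNIV_eq_square by (simp add: Compl_eq_Diff_UNIV card_Diff_singleton)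

lemma card_fixed_field_nonzero: "card {x. x \<noteq> 0 \<and> \<sigma> x = x} = card fixed_field - 1"
proof -
  have "{x. x \<noteq> 0 \<and> \<sigma> x = x} = fixed_field - {0}" by (auto simp: fixed_field_def)
  then show ?thesis by (simp add: card_Diff_singleton fixed_field_def)
qed

lemma field_norm_mult: "field_norm (x * y) = field_norm x * field_norm y"
  by (simp add: field_norm_def sigma_mult algebra_simps)

lemma field_norm_nonzero: "x \<noteq> 0 \<Longrightarrow> field_norm x \<noteq> 0"
  by (simp add: field_norm_def)

lemma field_norm_fixed: "\<sigma> (field_norm x) = field_norm x"
  by (simp add: field_norm_def sigma_mult sigma_inv mult.commute)

lemma sigma_quot_mult: "sigma_quot (x * y) = sigma_quot x * sigma_quot y"
  by (simp add: sigma_quot_def sigma_mult)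

lemma sigma_quot_nonzero: "x \<noteq> 0 \<Longrightarrow> sigma_quot x \<noteq> 0"
  by (simp add: sigma_quot_def)

lemma field_norm_sigma_quot: "c \<noteq> 0 \<Longrightarrow> field_norm (sigma_quot c) = 1"
  by (simp add: field_norm_def sigma_quot_def sigma_inv)

lemma hilbert90:
  assumes "field_norm u = 1"
  obtains c where "c \<noteq> 0" and "sigma_quot c = u"
proof (cases "u = -1")
  case True
  then show ?thesis using that[of d] d_nonzero by (simp add: sigma_quot_def sigma_d)
next
  case False
  have c: "1 + \<sigma> u \<noteq> 0"
  proof
    assume "1 + \<sigma> u = 0"
    then have "\<sigma> (\<sigma> u) = -1" by (simp add: add_eq_0_iff)
    with False show False by (simp add: sigma_inv)
  qed
  have "\<sigma> (1 + \<sigma> u) = u * (1 + \<sigma> u)"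
    using assms by (simp add: field_norm_def sigma_add sigma_inv algebra_simps)
  then have "sigma_quot (1 + \<sigma> u) = u" using c by (simp add: sigma_quot_def)
  with c show ?thesis by (rule that)
qed

lemma sigma_quot_image: "sigma_quot ` (- {0}) = {u. field_norm u = 1}"
proof
  show "sigma_quot ` (- {0}) \<subseteq> {u. field_norm u = 1}" using field_norm_sigma_quot by auto
  show "{u. field_norm u = 1} \<subseteq> sigma_quot ` (- {0})"
  proof
    fix u assume "u \<in> {u. field_norm u = 1}"
    then obtain c where "c \<noteq> 0" "sigma_quot c = u" using hilbert90 by blast
    then show "u \<in> sigma_quot ` (- {0})" by auto
  qed
qed

lemma card_field_norm_one: "card {u. field_norm u = 1} = card fixed_field + 1"
proof -
  have "{x. x \<noteq> 0 \<and> sigma_quot x = 1} = {x. x \<noteq> 0 \<and> \<sigma> x = x}"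
    by (auto simp: sigma_quot_def)
  then have "card (- {0::'k}) = (card fixed_field - 1) * card {u. field_norm u = 1}"
    using card_nonzero_eq_card_kernel_mult_card_image[of sigma_quot, OF sigma_quot_mult sigma_quot_nonzero]
    by (simp add: sigma_quot_image card_fixed_field_nonzero)
  then have "(card fixed_field - 1) * (card fixed_field + 1) =
             (card fixed_field - 1) * card {u. field_norm u = 1}"
    by (simp only: card_nonzero nat_square_minus_one)
  moreover have "card fixed_field - 1 \<noteq> 0" using two_le_card_fixed_field by simp
  ultimately show ?thesis by (metis mult_left_cancel)
qed

lemma field_norm_image: "field_norm ` (- {0}) = fixed_field - {0}"
proof (rule card_subset_eq)
  show "field_norm ` (- {0}) \<subseteq> fixed_field - {0}"
    using field_norm_fixed field_norm_nonzero by (auto simp: fixed_field_def)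
  have "{x. x \<noteq> 0 \<and> field_norm x = 1} = {u. field_norm u = 1}"
    by (auto simp: field_norm_def)
  then have "card (- {0::'k}) = (card fixed_field + 1) * card (field_norm ` (- {0}))"
    using card_nonzero_eq_card_kernel_mult_card_image[of field_norm, OF field_norm_mult field_norm_nonzero]
    by (simp add: card_field_norm_one)
  then have "(card fixed_field + 1) * (card fixed_field - 1) =
             (card fixed_field + 1) * card (field_norm ` (- {0}))"
    by (metis card_nonzero nat_square_minus_one mult.commute)
  then have "card (field_norm ` (- {0})) = card fixed_field - 1"
    by (metis mult_left_cancel add_is_0 zero_neq_one)
  then show "card (field_norm ` (- {0})) = card (fixed_field - {0})"
    by (simp add: card_Diff_singleton fixed_field_def)
qed simp

lemma exists_field_norm_eq_minus_one: "\<exists>m. m \<noteq> 0 \<and> field_norm m = -1"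
proof -
  have "-1 \<in> field_norm ` (- {0})" by (simp add: field_norm_image fixed_field_def)
  then show ?thesis by auto
qed

lemma field_norm_one_cyclic: "\<exists>h. range (\<lambda>i::nat. h ^ i) = {u. field_norm u = 1}"
proof -
  obtain g :: 'k where g: "g \<noteq> 0" "\<And>x. x \<noteq> 0 \<Longrightarrow> \<exists>i. x = g ^ i"
    using finite_field_generator by blast
  have "range (\<lambda>i::nat. sigma_quot g ^ i) = sigma_quot ` (- {0})"
  proof (intro equalityI subsetI)
    fix y assume "y \<in> range (\<lambda>i::nat. sigma_quot g ^ i)"
    then obtain i where "y = sigma_quot (g ^ i)" by (auto simp: sigma_quot_def power_divide)
    then show "y \<in> sigma_quot ` (- {0})" using g(1) by simp
  next
    fix y assume "y \<in> sigma_quot ` (- {0})"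
    then obtain i where "y = sigma_quot (g ^ i)" using g(2) by auto
    then show "y \<in> range (\<lambda>i::nat. sigma_quot g ^ i)" by (simp add: sigma_quot_def power_divide)
  qed
  then show ?thesis by (auto simp: sigma_quot_image)
qed

lemma field_norm_power_int: "field_norm (x powi i) = field_norm x powi i"
  by (simp add: field_norm_def power_int_mult_distrib)

lemma field_norm_one_generator:
  obtains h where "field_norm h = 1" and "field_element_of_order h (card fixed_field + 1)"
    and "range (\<lambda>i::nat. h ^ i) = {u. field_norm u = 1}"
proof -
  obtain h where h: "range (\<lambda>i::nat. h ^ i) = {u. field_norm u = 1}"
    using field_norm_one_cyclic by blast
  have "h \<in> range (\<lambda>i::nat. h ^ i)" by (metis power_one_right rangeI)
  then have "field_norm h = 1" using h by simp
  moreover from this have "h \<noteq> 0" by (auto simp: field_norm_def)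
  then have "field_element_of_order h (card fixed_field + 1)"
    by unfold_locales (simp_all add: h card_field_norm_one)
  ultimately show ?thesis using h that by blast
qed

end

section \<open>The nonassociative quaternion algebra and its loop\<close>

locale nonassoc_quaternion = quadratic_ext \<sigma> d
  for \<sigma> :: "'k::{field,finite} \<Rightarrow> 'k" and d :: 'k +
  fixes a :: 'k
  assumes a_not_fixed: "\<sigma> a \<noteq> a"
begin

lemma a_nonzero: "a \<noteq> 0"
  using a_not_fixed by auto

lemma nq_mult_nonzero:
  assumes "x \<noteq> (0, 0)" "y \<noteq> (0, 0)" shows "nq_mult \<sigma> a x y \<noteq> (0, 0)"
proof
  obtain x0 x1 y0 y1 where xy: "x = (x0, x1)" "y = (y0, y1)" by (cases x, cases y) auto
  assume "nq_mult \<sigma> a x y = (0, 0)"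
  then have e1: "x0 * y0 + x1 * \<sigma> y1 * a = 0" and e2: "x0 * y1 + x1 * \<sigma> y0 = 0"
    by (auto simp: nq_mult_def xy)
  consider "x1 = 0" | "x1 \<noteq> 0" "x0 = 0" | "x1 \<noteq> 0" "x0 \<noteq> 0" by blast
  then show False
  proof cases
    case 1
    then show ?thesis using e1 e2 assms xy by auto
  next
    case 2
    then show ?thesis using e1 e2 a_nonzero assms xy by auto
  next
    case 3
    \<comment> \<open>here a is forced to be a quotient of two norms, hence fixed by \<sigma>\<close>
    have "y0 \<noteq> 0" using e2 3 assms xy by auto
    have s2: "\<sigma> x0 * \<sigma> y1 = - (\<sigma> x1 * y0)"
      using arg_cong[OF e2, of \<sigma>] by (simp add: sigma_add sigma_mult sigma_inv eq_neg_iff_add_eq_0)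
    have "0 = \<sigma> x0 * (x0 * y0 + x1 * \<sigma> y1 * a)" using e1 by simp
    also have "\<dots> = x0 * \<sigma> x0 * y0 + x1 * a * (\<sigma> x0 * \<sigma> y1)" by (simp add: algebra_simps)
    also have "\<dots> = y0 * (field_norm x0 - a * field_norm x1)"
      by (simp add: s2 field_norm_def algebra_simps)
    finally have "a = field_norm x0 / field_norm x1"
      using \<open>y0 \<noteq> 0\<close> 3 field_norm_nonzero by (simp add: field_simps)
    then have "\<sigma> a = a" by (simp add: field_norm_fixed)
    with a_not_fixed show False ..
  qed
qed

definition H_id :: "'k \<Rightarrow> 'k \<times> 'k \<Rightarrow> 'k \<times> 'k" where
  "H_id k x = (fst x, snd x * k)"

definition H_sigma :: "'k \<Rightarrow> 'k \<times> 'k \<Rightarrow> 'k \<times> 'k" where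
  "H_sigma k x = (\<sigma> (fst x), \<sigma> (snd x) * k)"

lemma H_id_apply [simp]: "H_id k (x0, x1) = (x0, x1 * k)"
  by (simp add: H_id_def)

lemma H_sigma_apply [simp]: "H_sigma k (x0, x1) = (\<sigma> x0, \<sigma> x1 * k)"
  by (simp add: H_sigma_def)

lemma H_id_1: "H_id 1 = id"
  by (auto simp: H_id_def)

lemma H_id_comp_H_id: "H_id k \<circ> H_id l = H_id (l * k)"
  by (auto simp: H_id_def mult.assoc)

lemma H_id_comp_H_sigma: "H_id k \<circ> H_sigma l = H_sigma (l * k)"
  by (auto simp: H_id_def H_sigma_def mult.assoc)

lemma H_sigma_comp_H_id: "H_sigma k \<circ> H_id l = H_sigma (\<sigma> l * k)"
  by (auto simp: H_id_def H_sigma_def mult.assoc sigma_mult)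

lemma H_sigma_comp_H_sigma: "H_sigma k \<circ> H_sigma l = H_id (\<sigma> l * k)"
  by (auto simp: H_id_def H_sigma_def mult.assoc sigma_mult sigma_inv)

lemma H_id_nq_mult:
  assumes "field_norm k = 1"
  shows "H_id k (nq_mult \<sigma> a x y) = nq_mult \<sigma> a (H_id k x) (H_id k y)"
proof -
  obtain x0 x1 y0 y1 where xy: "x = (x0, x1)" "y = (y0, y1)" by (cases x, cases y) auto
  have "x1 * \<sigma> y1 * a = x1 * \<sigma> y1 * a * field_norm k" using assms by simp
  also have "\<dots> = x1 * k * \<sigma> (y1 * k) * a"
    by (simp add: field_norm_def sigma_mult algebra_simps)
  finally show ?thesis by (simp add: xy nq_mult_def algebra_simps)
qed

lemma H_sigma_nq_mult:
  assumes "field_norm k * a = \<sigma> a"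
  shows "H_sigma k (nq_mult \<sigma> a x y) = nq_mult \<sigma> a (H_sigma k x) (H_sigma k y)"
proof -
  obtain x0 x1 y0 y1 where xy: "x = (x0, x1)" "y = (y0, y1)" by (cases x, cases y) auto
  have "\<sigma> (x1 * \<sigma> y1 * a) = \<sigma> x1 * y1 * (field_norm k * a)"
    using assms by (simp add: sigma_mult sigma_inv)
  also have "\<dots> = \<sigma> x1 * k * \<sigma> (\<sigma> y1 * k) * a"
    by (simp add: field_norm_def sigma_mult sigma_inv algebra_simps)
  finally show ?thesis by (simp add: xy nq_mult_def sigma_add sigma_mult sigma_inv algebra_simps)
qed

lemma bij_H_id: "k \<noteq> 0 \<Longrightarrow> bij (H_id k)"
  by (rule o_bij[of "H_id (inverse k)"]) (simp_all add: H_id_comp_H_id H_id_1)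

lemma bij_H_sigma: "k \<noteq> 0 \<Longrightarrow> bij (H_sigma k)"
  by (rule o_bij[of "H_sigma (\<sigma> (inverse k))"])
     (simp_all add: H_sigma_comp_H_sigma H_id_1 sigma_inv flip: sigma_mult)

lemma alg_aut_H_id:
  assumes "field_norm k = 1" shows "alg_aut \<sigma> a (H_id k)"
proof -
  have "k \<noteq> 0" using assms by (auto simp: field_norm_def)
  then show ?thesis using bij_H_id H_id_nq_mult[OF assms]
    by (auto simp: alg_aut_def H_id_def algebra_simps)
qed

lemma alg_aut_H_sigma:
  assumes "field_norm k * a = \<sigma> a" shows "alg_aut \<sigma> a (H_sigma k)"
proof -
  have "k \<noteq> 0" using assms a_nonzero by (auto simp: field_norm_def)
  then show ?thesis using bij_H_sigma H_sigma_nq_mult[OF assms]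
    by (auto simp: alg_aut_def H_sigma_def sigma_add sigma_mult algebra_simps)
qed

lemma alg_aut_eq_zero_iff:
  assumes "alg_aut \<sigma> a \<Phi>" shows "\<Phi> x = (0, 0) \<longleftrightarrow> x = (0, 0)"
proof -
  obtain u v where uv: "\<Phi> (0, 0) = (u, v)" by fastforce
  have "\<Phi> (0 + 0, 0 + 0) = (u + u, v + v)"
    using assms uv unfolding alg_aut_def by (metis fst_conv snd_conv)
  then have "\<Phi> (0, 0) = (0, 0)" using uv by (metis add_cancel_right_right prod.inject)
  moreover have "inj \<Phi>" using assms by (simp add: alg_aut_def bij_is_inj)
  ultimately show ?thesis by (metis injD)
qed

lemma alg_aut_image_loop_carrier:
  assumes "alg_aut \<sigma> a \<Phi>" shows "\<Phi> ` loop_carrier = loop_carrier"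
proof -
  have "bij \<Phi>" using assms by (simp add: alg_aut_def)
  then have "\<Phi> ` (UNIV - {(0, 0)}) = UNIV - {\<Phi> (0, 0)}"
    by (simp add: bij_def inj_on_image_set_diff[of \<Phi> UNIV])
  then show ?thesis using alg_aut_eq_zero_iff[OF assms, of "(0, 0)"] by (simp add: loop_carrier_def)
qed

lemma nq_mult_loop_carrier:
  "x \<in> loop_carrier \<Longrightarrow> y \<in> loop_carrier \<Longrightarrow> nq_mult \<sigma> a x y \<in> loop_carrier"
  using nq_mult_nonzero by (simp add: loop_carrier_def)

lemma alg_aut_restrict_loop_aut:
  assumes "alg_aut \<sigma> a \<Phi>"
  shows "restrict \<Phi> loop_carrier \<in> carrier (AutL \<sigma> a)"
    and "extends_to_alg_aut \<sigma> a (restrict \<Phi> loop_carrier)"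
proof -
  have "inj \<Phi>" using assms by (simp add: alg_aut_def bij_is_inj)
  then have "bij_betw \<Phi> loop_carrier loop_carrier"
    using alg_aut_image_loop_carrier[OF assms] by (simp add: bij_betw_def inj_on_subset[OF _ subset_UNIV])
  then have "bij_betw (restrict \<Phi> loop_carrier) loop_carrier loop_carrier"
    by (rule bij_betw_restrict)
  moreover have "\<Phi> (nq_mult \<sigma> a x y) = nq_mult \<sigma> a (\<Phi> x) (\<Phi> y)" for x y
    using assms unfolding alg_aut_def by blast
  ultimately show "restrict \<Phi> loop_carrier \<in> carrier (AutL \<sigma> a)"
    using nq_mult_loop_carrier by (simp add: AutL_def loop_aut_def)
  show "extends_to_alg_aut \<sigma> a (restrict \<Phi> loop_carrier)"
    using assms by (auto simp: extends_to_alg_aut_def)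
qed

lemma loop_aut_into: "loop_aut \<sigma> a \<phi> \<Longrightarrow> x \<in> loop_carrier \<Longrightarrow> \<phi> x \<in> loop_carrier"
  by (auto simp: loop_aut_def bij_betw_def)

lemma AutL_monoid: "monoid (AutL \<sigma> a)"
proof
  fix \<phi> \<psi> \<chi>
  assume "\<phi> \<in> carrier (AutL \<sigma> a)" "\<psi> \<in> carrier (AutL \<sigma> a)"
  then have \<phi>: "loop_aut \<sigma> a \<phi>" and \<psi>: "loop_aut \<sigma> a \<psi>" by (auto simp: AutL_def)
  have "bij_betw (\<phi> \<circ> \<psi>) loop_carrier loop_carrier"
    using bij_betw_trans[of \<psi> loop_carrier loop_carrier \<phi> loop_carrier] \<phi> \<psi>
    unfolding loop_aut_def by blast
  then have "bij_betw (restrict (\<phi> \<circ> \<psi>) loop_carrier) loop_carrier loop_carrier"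
    by (rule bij_betw_restrict)
  moreover have "restrict (\<phi> \<circ> \<psi>) loop_carrier (nq_mult \<sigma> a x y)
      = nq_mult \<sigma> a (restrict (\<phi> \<circ> \<psi>) loop_carrier x) (restrict (\<phi> \<circ> \<psi>) loop_carrier y)"
    if "x \<in> loop_carrier" "y \<in> loop_carrier" for x y
    using that \<phi> \<psi> loop_aut_into[OF \<psi>] nq_mult_loop_carrier by (simp add: loop_aut_def)
  ultimately show "\<phi> \<otimes>\<^bsub>AutL \<sigma> a\<^esub> \<psi> \<in> carrier (AutL \<sigma> a)"
    by (simp add: AutL_def loop_aut_def)
  assume "\<chi> \<in> carrier (AutL \<sigma> a)"
  then have \<chi>: "loop_aut \<sigma> a \<chi>" by (simp add: AutL_def)
  show "\<phi> \<otimes>\<^bsub>AutL \<sigma> a\<^esub> \<psi> \<otimes>\<^bsub>AutL \<sigma> a\<^esub> \<chi> = \<phi> \<otimes>\<^bsub>AutL \<sigma> a\<^esub> (\<psi> \<otimes>\<^bsub>AutL \<sigma> a\<^esub> \<chi>)"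
    using loop_aut_into[OF \<chi>] loop_aut_into[OF \<psi>] by (auto simp: AutL_def fun_eq_iff)
next
  have "bij_betw (restrict id loop_carrier) loop_carrier loop_carrier"
    by (rule bij_betw_restrict) simp
  then show "\<one>\<^bsub>AutL \<sigma> a\<^esub> \<in> carrier (AutL \<sigma> a)"
    using nq_mult_loop_carrier by (simp add: AutL_def loop_aut_def)
next
  fix \<phi> assume "\<phi> \<in> carrier (AutL \<sigma> a)"
  then have "loop_aut \<sigma> a \<phi>" by (simp add: AutL_def)
  then show "\<one>\<^bsub>AutL \<sigma> a\<^esub> \<otimes>\<^bsub>AutL \<sigma> a\<^esub> \<phi> = \<phi>" and "\<phi> \<otimes>\<^bsub>AutL \<sigma> a\<^esub> \<one>\<^bsub>AutL \<sigma> a\<^esub> = \<phi>"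
    using loop_aut_into by (auto simp: AutL_def loop_aut_def fun_eq_iff extensional_def)
qed

lemma AutL_one: "\<one>\<^bsub>AutL \<sigma> a\<^esub> = restrict id loop_carrier"
  by (simp add: AutL_def)

lemma AutL_mult_restrict_alg_aut:
  assumes "alg_aut \<sigma> a \<Psi>"
  shows "restrict \<Phi> loop_carrier \<otimes>\<^bsub>AutL \<sigma> a\<^esub> restrict \<Psi> loop_carrier = restrict (\<Phi> \<circ> \<Psi>) loop_carrier"
  using alg_aut_image_loop_carrier[OF assms] by (auto simp: AutL_def fun_eq_iff)

lemma inner_aut_H_id_sigma_quot:
  assumes "c \<noteq> 0"
  shows "inner_aut \<sigma> a (restrict (H_id (sigma_quot c)) loop_carrier)"
proof -
  have "loop_aut \<sigma> a (restrict (H_id (sigma_quot c)) loop_carrier)"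
    using alg_aut_restrict_loop_aut(1)[OF alg_aut_H_id[OF field_norm_sigma_quot[OF assms]]]
    by (simp add: AutL_def)
  moreover have "(c, 0) \<in> loop_carrier" "(inverse c, 0) \<in> loop_carrier"
    using assms by (auto simp: loop_carrier_def)
  moreover have "nq_mult \<sigma> a (inverse c, 0) (c, 0) = (1, 0)"
    using assms by (simp add: nq_mult_def)
  moreover have "restrict (H_id (sigma_quot c)) loop_carrier x
                   = nq_mult \<sigma> a (nq_mult \<sigma> a (inverse c, 0) x) (c, 0)" if "x \<in> loop_carrier" for x
  proof -
    obtain x0 x1 where "x = (x0, x1)" by fastforce
    then show ?thesis using that assms by (simp add: nq_mult_def sigma_quot_def field_simps)
  qed
  ultimately show ?thesis unfolding inner_aut_def by blast
qed

lemma cyclic_subgroup_of_AutL: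
  "\<exists>H. subgroup H (AutL \<sigma> a) \<and>
       (AutL \<sigma> a)\<lparr>carrier := H\<rparr> \<cong> integer_mod_group (card fixed_field + 1) \<and>
       (\<forall>\<phi>\<in>H. inner_aut \<sigma> a \<phi> \<and> extends_to_alg_aut \<sigma> a \<phi>)"
proof -
  let ?D = "integer_mod_group (card fixed_field + 1)"
  obtain h where norm_h: "field_norm h = 1" and "field_element_of_order h (card fixed_field + 1)"
    by (rule field_norm_one_generator)
  interpret field_element_of_order h "card fixed_field + 1" by fact
  have norm: "field_norm (h powi i) = 1" for i
    by (simp add: field_norm_power_int norm_h)
  define \<phi> where "\<phi> i = restrict (H_id (h powi i)) loop_carrier" for i
  have \<phi>_alg: "restrict (H_id (h powi i)) loop_carrier \<in> carrier (AutL \<sigma> a)"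
      "extends_to_alg_aut \<sigma> a (restrict (H_id (h powi i)) loop_carrier)" for i
    using alg_aut_restrict_loop_aut[OF alg_aut_H_id[OF norm]] by auto
  have hom: "\<phi> \<in> hom ?D (AutL \<sigma> a)"
  proof (rule homI)
    fix i j
    have "\<phi> i \<otimes>\<^bsub>AutL \<sigma> a\<^esub> \<phi> j = restrict (H_id (h powi j * h powi i)) loop_carrier"
      by (simp add: \<phi>_def AutL_mult_restrict_alg_aut[OF alg_aut_H_id[OF norm]] H_id_comp_H_id)
    also have "\<dots> = \<phi> (i \<otimes>\<^bsub>?D\<^esub> j)"
      using power_int_mod_order[of "i + j"] nonzero by (simp add: \<phi>_def power_int_add mult.commute)
    finally show "\<phi> (i \<otimes>\<^bsub>?D\<^esub> j) = \<phi> i \<otimes>\<^bsub>AutL \<sigma> a\<^esub> \<phi> j" by simp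
  qed (simp add: \<phi>_def \<phi>_alg)
  have inj: "inj_on \<phi> (carrier ?D)"
  proof
    fix i j assume ij: "i \<in> carrier ?D" "j \<in> carrier ?D" "\<phi> i = \<phi> j"
    have "h powi i = h powi j"
      using fun_cong[OF ij(3), of "(0, 1)"] by (simp add: \<phi>_def loop_carrier_def)
    then show "i = j" using power_int_inj ij by (simp add: carrier_integer_mod_group)
  qed
  interpret D: group ?D by simp
  have "\<phi> \<one>\<^bsub>?D\<^esub> = \<one>\<^bsub>AutL \<sigma> a\<^esub>" by (simp add: \<phi>_def AutL_one H_id_1)
  moreover have "\<exists>y\<in>carrier ?D. x \<otimes>\<^bsub>?D\<^esub> y = \<one>\<^bsub>?D\<^esub> \<and> y \<otimes>\<^bsub>?D\<^esub> x = \<one>\<^bsub>?D\<^esub>"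
    if "x \<in> carrier ?D" for x
    using that D.inv_closed D.r_inv D.l_inv by blast
  ultimately have "subgroup (\<phi> ` carrier ?D) (AutL \<sigma> a)"
    and "(AutL \<sigma> a)\<lparr>carrier := \<phi> ` carrier ?D\<rparr> \<cong> ?D"
    using inj_hom_image_subgroup_iso[OF AutL_monoid hom inj D.m_closed D.one_closed] by blast+
  moreover have "inner_aut \<sigma> a (\<phi> i) \<and> extends_to_alg_aut \<sigma> a (\<phi> i)" for i
  proof -
    obtain c where "c \<noteq> 0" "sigma_quot c = h powi i" using hilbert90[OF norm] .
    then show ?thesis using inner_aut_H_id_sigma_quot[of c] \<phi>_alg(2) by (simp add: \<phi>_def)
  qed
  ultimately show ?thesis by blast
qed

end

section \<open>The dicyclic subgroup\<close>

locale dicyclic_data = nonassoc_quaternion \<sigma> d a + field_element_of_order h "2 * l"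
  for \<sigma> :: "'k::{field,finite} \<Rightarrow> 'k" and d a h :: 'k and l :: nat +
  fixes m :: 'k
  assumes norm_h: "field_norm h = 1"
    and h_half_order: "h ^ l = -1"
    and norm_m: "field_norm m = -1"
    and sigma_a: "\<sigma> a = - a"
begin

text \<open>With x = H_id h and y = H_sigma m, the pair (i, e) is sent to x^i y^e.\<close>

definition dicyclic_map :: "int \<times> bool \<Rightarrow> 'k \<times> 'k \<Rightarrow> 'k \<times> 'k" where
  "dicyclic_map x = (if snd x then H_sigma (m * h powi fst x) else H_id (h powi fst x))"

definition dicyclic_aut :: "int \<times> bool \<Rightarrow> 'k \<times> 'k \<Rightarrow> 'k \<times> 'k" where
  "dicyclic_aut x = restrict (dicyclic_map x) loop_carrier"

lemma sigma_h: "\<sigma> h = inverse h"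
  using norm_h nonzero by (simp add: field_norm_def field_simps)

lemma power_int_h_mod: "h powi (i mod (2 * int l)) = h powi i"
  using power_int_mod_order[of i] by simp

lemma alg_aut_dicyclic_map: "alg_aut \<sigma> a (dicyclic_map x)"
proof -
  have norm: "field_norm (h powi i) = 1" for i
    by (simp add: field_norm_power_int norm_h)
  have "field_norm (m * h powi i) * a = \<sigma> a" for i
    by (simp add: field_norm_mult norm norm_m sigma_a)
  then show ?thesis by (simp add: dicyclic_map_def alg_aut_H_id[OF norm] alg_aut_H_sigma)
qed

lemma dicyclic_aut_mult:
  "dicyclic_aut (x \<otimes>\<^bsub>dicyclic_group l\<^esub> y) = dicyclic_aut x \<otimes>\<^bsub>AutL \<sigma> a\<^esub> dicyclic_aut y"
proof -
  obtain i e j f where xy: "x = (i, e)" "y = (j, f)" by fastforce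
  have "dicyclic_aut x \<otimes>\<^bsub>AutL \<sigma> a\<^esub> dicyclic_aut y = restrict (dicyclic_map x \<circ> dicyclic_map y) loop_carrier"
    by (simp add: dicyclic_aut_def AutL_mult_restrict_alg_aut[OF alg_aut_dicyclic_map])
  moreover have "dicyclic_map (x \<otimes>\<^bsub>dicyclic_group l\<^esub> y) = dicyclic_map x \<circ> dicyclic_map y"
  proof (cases e; cases f)
    assume "\<not> e" "\<not> f"
    then have "dicyclic_map (x \<otimes>\<^bsub>dicyclic_group l\<^esub> y) = H_id (h powi (i + j))"
      by (simp add: xy dicyclic_map_def mult_dicyclic_group power_int_h_mod)
    also have "h powi (i + j) = h powi j * h powi i"
      using nonzero by (metis power_int_add mult.commute)
    also have "H_id \<dots> = dicyclic_map x \<circ> dicyclic_map y"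
      using \<open>\<not> e\<close> \<open>\<not> f\<close> by (simp add: xy dicyclic_map_def H_id_comp_H_id)
    finally show ?thesis .
  next
    assume "\<not> e" "f"
    then have "dicyclic_map (x \<otimes>\<^bsub>dicyclic_group l\<^esub> y) = H_sigma (m * h powi (i + j))"
      by (simp add: xy dicyclic_map_def mult_dicyclic_group power_int_h_mod)
    also have "m * h powi (i + j) = m * h powi j * h powi i"
      using nonzero by (metis power_int_add mult.commute mult.assoc)
    also have "H_sigma \<dots> = dicyclic_map x \<circ> dicyclic_map y"
      using \<open>\<not> e\<close> \<open>f\<close> by (simp add: xy dicyclic_map_def H_id_comp_H_sigma)
    finally show ?thesis .
  next
    assume "e" "\<not> f"
    then have "dicyclic_map (x \<otimes>\<^bsub>dicyclic_group l\<^esub> y) = H_sigma (m * h powi (i - j))"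
      by (simp add: xy dicyclic_map_def mult_dicyclic_group power_int_h_mod)
    also have "m * h powi (i - j) = \<sigma> (h powi j) * (m * h powi i)"
      using nonzero by (simp add: sigma_h power_int_minus power_int_diff field_simps)
    also have "H_sigma \<dots> = dicyclic_map x \<circ> dicyclic_map y"
      using \<open>e\<close> \<open>\<not> f\<close> by (simp add: xy dicyclic_map_def H_sigma_comp_H_id)
    finally show ?thesis .
  next
    assume "e" "f"
    then have "dicyclic_map (x \<otimes>\<^bsub>dicyclic_group l\<^esub> y) = H_id (h powi (i - j + int l))"
      by (simp add: xy dicyclic_map_def mult_dicyclic_group power_int_h_mod)
    also have "h powi (i - j + int l) = h powi (- j) * h powi i * h powi (int l)"
      using nonzero by (metis power_int_add uminus_add_conv_diff)
    also have "\<dots> = field_norm m * (h powi (- j) * h powi i)"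
      using norm_m h_half_order by simp
    also have "\<dots> = \<sigma> (m * h powi j) * (m * h powi i)"
      by (simp add: sigma_mult sigma_h power_int_inverse power_int_minus field_norm_def algebra_simps)
    also have "H_id \<dots> = dicyclic_map x \<circ> dicyclic_map y"
      using \<open>e\<close> \<open>f\<close> by (simp add: xy dicyclic_map_def H_sigma_comp_H_sigma)
    finally show ?thesis .
  qed
  ultimately show ?thesis by (simp add: dicyclic_aut_def)
qed

lemma dicyclic_aut_apply_d: "dicyclic_aut (i, e) (d, 0) = (if e then (- d, 0) else (d, 0))"
  using d_nonzero by (simp add: dicyclic_aut_def dicyclic_map_def loop_carrier_def sigma_d)

lemma dicyclic_aut_apply_t: "dicyclic_aut (i, e) (0, 1) = (0, if e then m * h powi i else h powi i)"
  by (simp add: dicyclic_aut_def dicyclic_map_def loop_carrier_def)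

lemma inj_on_dicyclic_aut: "inj_on dicyclic_aut (carrier (dicyclic_group l))"
proof
  fix x y assume x: "x \<in> carrier (dicyclic_group l)" and y: "y \<in> carrier (dicyclic_group l)"
    and eq: "dicyclic_aut x = dicyclic_aut y"
  obtain i e j f where xy: "x = (i, e)" "y = (j, f)" by fastforce
  have "d \<noteq> - d"
  proof
    assume "d = - d"
    then have "2 * d = 0" by (metis mult_2 add.right_inverse)
    with two_neq_zero d_nonzero show False by simp
  qed
  then have "e = f" using fun_cong[OF eq, of "(d, 0)"] by (auto simp: xy dicyclic_aut_apply_d split: if_splits)
  moreover have "m \<noteq> 0" using norm_m by (auto simp: field_norm_def)
  ultimately have "h powi i = h powi j"
    using fun_cong[OF eq, of "(0, 1)"] by (simp add: xy dicyclic_aut_apply_t split: if_splits)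
  then have "i = j" using power_int_inj x y by (simp add: xy carrier_dicyclic_group)
  with \<open>e = f\<close> show "x = y" by (simp add: xy)
qed

lemma dicyclic_subgroup:
  "\<exists>H. subgroup H (AutL \<sigma> a) \<and> (AutL \<sigma> a)\<lparr>carrier := H\<rparr> \<cong> dicyclic_group l \<and>
       (\<forall>\<phi>\<in>H. extends_to_alg_aut \<sigma> a \<phi>)"
proof -
  have "0 < l" using order_pos by simp
  have "dicyclic_aut \<in> hom (dicyclic_group l) (AutL \<sigma> a)"
    using alg_aut_restrict_loop_aut(1)[OF alg_aut_dicyclic_map] dicyclic_aut_mult
    by (auto simp: dicyclic_aut_def hom_def)
  moreover have "dicyclic_aut \<one>\<^bsub>dicyclic_group l\<^esub> = \<one>\<^bsub>AutL \<sigma> a\<^esub>"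
    by (simp add: dicyclic_aut_def dicyclic_map_def one_dicyclic_group AutL_one H_id_1)
  moreover have "\<one>\<^bsub>dicyclic_group l\<^esub> \<in> carrier (dicyclic_group l)"
    using \<open>0 < l\<close> by (simp add: one_dicyclic_group carrier_dicyclic_group)
  ultimately have "subgroup (dicyclic_aut ` carrier (dicyclic_group l)) (AutL \<sigma> a)"
    and "(AutL \<sigma> a)\<lparr>carrier := dicyclic_aut ` carrier (dicyclic_group l)\<rparr> \<cong> dicyclic_group l"
    using inj_hom_image_subgroup_iso[OF AutL_monoid _ inj_on_dicyclic_aut dicyclic_group_mult_closed]
      dicyclic_group_inverse \<open>0 < l\<close> by blast+
  moreover have "extends_to_alg_aut \<sigma> a (dicyclic_aut x)" for x
    using alg_aut_restrict_loop_aut(2)[OF alg_aut_dicyclic_map] by (simp add: dicyclic_aut_def)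
  ultimately show ?thesis by blast
qed

end

context nonassoc_quaternion begin

lemma dicyclic_subgroup_of_AutL:
  assumes "\<sigma> a = - a"
  shows "\<exists>H. subgroup H (AutL \<sigma> a) \<and>
           (AutL \<sigma> a)\<lparr>carrier := H\<rparr> \<cong> dicyclic_group ((card fixed_field + 1) div 2) \<and>
           (\<forall>\<phi>\<in>H. extends_to_alg_aut \<sigma> a \<phi>)"
proof -
  obtain h where norm_h: "field_norm h = 1" and ord: "field_element_of_order h (card fixed_field + 1)"
    and range: "range (\<lambda>i::nat. h ^ i) = {u. field_norm u = 1}"
    by (rule field_norm_one_generator)
  have "-1 \<in> range (\<lambda>i::nat. h ^ i)" by (simp add: range field_norm_def)
  moreover have "(-1::'k) \<noteq> 1" using two_neq_zero by (metis one_add_one add.right_inverse)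
  ultimately obtain l where l: "card fixed_field + 1 = 2 * l" "h ^ l = -1"
    using field_element_of_order.minus_one_power_half_order[OF ord] by blast
  obtain m where "field_norm m = -1" using exists_field_norm_eq_minus_one by blast
  then interpret dicyclic_data \<sigma> d a h l m
    using ord norm_h l assms by unfold_locales (simp_all add: field_element_of_order_def)
  show ?thesis using dicyclic_subgroup l by simp
qed

end

theorem mainTheorem6:
  fixes \<sigma> :: "'k::{field,finite} \<Rightarrow> 'k" and d a :: 'k and q :: nat
  assumes sigma_add: "\<And>x y. \<sigma> (x + y) = \<sigma> x + \<sigma> y"
    and sigma_mult: "\<And>x y. \<sigma> (x * y) = \<sigma> x * \<sigma> y"
    and sigma_inv: "\<And>x. \<sigma> (\<sigma> x) = x"
    and sigma_nontriv: "\<sigma> \<noteq> id"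
    and q_def: "q = card {x. \<sigma> x = x}"
    and char: "(2::'k) \<noteq> 0"
    and d_gen: "\<sigma> d \<noteq> d"
    and d_sq: "\<sigma> (d ^ 2) = d ^ 2"
    and a_notin: "\<sigma> a \<noteq> a"
  shows "((\<forall>l. \<sigma> l = l \<and> l \<noteq> 0 \<longrightarrow> a \<noteq> l * d) \<longrightarrow>
           (\<exists>H. subgroup H (AutL \<sigma> a) \<and>
                (AutL \<sigma> a)\<lparr>carrier := H\<rparr> \<cong> integer_mod_group (q + 1) \<and>
                (\<forall>\<phi>\<in>H. inner_aut \<sigma> a \<phi> \<and> extends_to_alg_aut \<sigma> a \<phi>)))
       \<and> ((\<exists>l. \<sigma> l = l \<and> l \<noteq> 0 \<and> a = l * d) \<longrightarrow>
           (\<exists>H. subgroup H (AutL \<sigma> a) \<and>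
                (AutL \<sigma> a)\<lparr>carrier := H\<rparr> \<cong> dicyclic_group ((q + 1) div 2) \<and>
                (\<forall>\<phi>\<in>H. extends_to_alg_aut \<sigma> a \<phi>)))"
proof -
  interpret nonassoc_quaternion \<sigma> d a
    by unfold_locales (fact sigma_add sigma_mult sigma_inv char d_gen d_sq a_notin)+
  have q: "q = card fixed_field" by (simp add: q_def fixed_field_def)
  have "\<sigma> a = - a" if "\<sigma> l = l" "a = l * d" for l
    using that by (simp add: sigma_mult sigma_d)
  then show ?thesis
    using cyclic_subgroup_of_AutL dicyclic_subgroup_of_AutL unfolding q by blast
qed

end
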